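(* Neither $\mathcal{L}_{ME}=\{(M,q)\mid ME[U](M)>q\}$ nor $\mathcal{L}_{GE}=\{(M,q)\mid GE[U](M)>q\}$ is a $k$-observable hyperproperty, for any positive integer $k$.
   Context: Stores map variables to values; $H$ is the high input variable and $O$ the low output variable. A trace is a sequence of stores. For a finite trace $t$, $t\circ t'$ is concatenation. A program is a set $M$ of infinite traces that is deterministic (two traces with the same initial value of $H$ are equal) and has a finite nonempty input domain $\mathbb{H}_M=\{\sigma_0(H)\}$. Input domains are unbounded in size. $M(h)$ is the output trace $(\sigma_1(O),\sigma_2(O),\dots)$ of the trace of $M$ starting with $H=h$. $\bot$ denotes termination. $M(h)=o$ means that for all $i$, $o_i=\bot$ or $M(h)_i=\bot$ or $M(h)_i=o_i$. For a distribution $\mu$ on $\mathbb{H}_M$, $\mu(O=o)=\sum_{h:M(h)=o}\mu(H=h)$, with conditional probabilities induced accordingly. $U$ is the uniform distribution on $\mathbb{H}_M$. Min-entropy QIF (log base 2): $\mathcal{V}[\mu](X)=\max_x\mu(X=x)$, $\mathcal{V}[\mu](X|Y)=\sum_y\mu(Y=y)\max_x\mu(X=x|Y=y)$, and $ME[\mu](M)=\log\frac1{\mathcal{V}[\mu](H)}-\log\frac1{\mathcal{V}[\mu](H|O)}$. Guessing-entropy QIF: $\mathcal{G}[\mu](X)=\sum_i i\,\mu(X=x_i)$ with the $x_i$ ordered by non-increasing probability; $\mathcal{G}[\mu](X|Y)=\sum_y\mu(Y=y)\sum_i i\,\mu(X=x_i|Y=y)$ with the analogous ordering for each $y$; and $GE[\mu](M)=\mathcal{G}[\mu](H)-\mathcal{G}[\mu](H|O)$.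 $\mathit{Prop}$ is the set of programs; $\mathit{Obs}$ is the set of deterministic finite sets of finite traces. For $S\in\mathit{Obs}$ and $T\in\mathit{Prop}$, $S\le T$ iff every $t\in S$ has some $t'$ with $t\circ t'\in T$. $P\subseteq\mathit{Prop}$ is $k$-observable iff for every $S\in P$ there is $T\in\mathit{Obs}$ with $T\le S$ and $|T|\le k$ such that every $S'\in\mathit{Prop}$ with $T\le S'$ is in $P$. A set $\mathcal{P}$ of pairs (program, rational) is $k$-observable iff $\{M\mid(M,q)\in\mathcal{P}\}$ is $k$-observable for every rational $q$, with the same $k$ for all $q$. *)

theory Defs
  imports Complex_Main "HOL-Library.Multiset"
begin

text \<open>Values: an unbounded (infinite) value domain; None plays the role of the
  termination marker bottom.\<close>
type_synonym val = "nat option"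

datatype var = HVar | OVar | Other nat

type_synonym store = "var \<Rightarrow> val"
type_synonym itrace = "nat \<Rightarrow> store"
type_synonym ftrace = "store list"

definition conc :: "ftrace \<Rightarrow> itrace \<Rightarrow> itrace" where
  "conc t t' = (\<lambda>i. if i < length t then t ! i else t' (i - length t))"

definition input_dom :: "itrace set \<Rightarrow> val set" where
  "input_dom M = {t 0 HVar | t. t \<in> M}"

definition Prop :: "itrace set set" where
  "Prop = {M. (\<forall>t\<in>M. \<forall>t'\<in>M. t 0 HVar = t' 0 HVar \<longrightarrow> t = t')
              \<and> finite (input_dom M) \<and> input_dom M \<noteq> {}}"

text \<open>Output trace M(h) = (sigma_1(O), sigma_2(O), ...).\<close>
definition out :: "itrace set \<Rightarrow> val \<Rightarrow> (nat \<Rightarrow> val)" where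
  "out M h = (\<lambda>i. (THE t. t \<in> M \<and> t 0 HVar = h) (Suc i) OVar)"

text \<open>The relation M(h) = o (equality up to termination).\<close>
definition out_is :: "itrace set \<Rightarrow> val \<Rightarrow> (nat \<Rightarrow> val) \<Rightarrow> bool" where
  "out_is M h ot \<longleftrightarrow> (\<forall>i. ot i = None \<or> out M h i = None \<or> out M h i = ot i)"

definition outs :: "itrace set \<Rightarrow> (nat \<Rightarrow> val) set" where
  "outs M = out M ` input_dom M"

definition unif :: "itrace set \<Rightarrow> val \<Rightarrow> real" where
  "unif M h = (if h \<in> input_dom M then 1 / real (card (input_dom M)) else 0)"

definition probO :: "(val \<Rightarrow> real) \<Rightarrow> itrace set \<Rightarrow> (nat \<Rightarrow> val) \<Rightarrow> real" where
  "probO \<mu> M ot = (\<Sum>h\<in>{h\<in>input_dom M. out_is M h ot}. \<mu> h)"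

definition probH_given_O :: "(val \<Rightarrow> real) \<Rightarrow> itrace set \<Rightarrow> val \<Rightarrow> (nat \<Rightarrow> val) \<Rightarrow> real" where
  "probH_given_O \<mu> M h ot = (if out_is M h ot then \<mu> h else 0) / probO \<mu> M ot"

definition vuln :: "(val \<Rightarrow> real) \<Rightarrow> itrace set \<Rightarrow> real" where
  "vuln \<mu> M = Max (\<mu> ` input_dom M)"

definition cond_vuln :: "(val \<Rightarrow> real) \<Rightarrow> itrace set \<Rightarrow> real" where
  "cond_vuln \<mu> M = (\<Sum>ot\<in>outs M. probO \<mu> M ot * Max ((\<lambda>h. probH_given_O \<mu> M h ot) ` input_dom M))"

definition ME :: "(val \<Rightarrow> real) \<Rightarrow> itrace set \<Rightarrow> real" where
  "ME \<mu> M = log 2 (1 / vuln \<mu> M) - log 2 (1 / cond_vuln \<mu> M)"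

definition guess :: "('a \<Rightarrow> real) \<Rightarrow> 'a set \<Rightarrow> real" where
  "guess p A = (let ps = rev (sorted_list_of_multiset (image_mset p (mset_set A)))
                in (\<Sum>i<length ps. real (Suc i) * ps ! i))"

definition guessH :: "(val \<Rightarrow> real) \<Rightarrow> itrace set \<Rightarrow> real" where
  "guessH \<mu> M = guess \<mu> (input_dom M)"

definition cond_guess :: "(val \<Rightarrow> real) \<Rightarrow> itrace set \<Rightarrow> real" where
  "cond_guess \<mu> M = (\<Sum>ot\<in>outs M. probO \<mu> M ot * guess (\<lambda>h. probH_given_O \<mu> M h ot) (input_dom M))"

definition GE :: "(val \<Rightarrow> real) \<Rightarrow> itrace set \<Rightarrow> real" where
  "GE \<mu> M = guessH \<mu> M - cond_guess \<mu> M"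

definition Obs :: "ftrace set set" where
  "Obs = {T. finite T \<and> (\<forall>t\<in>T. \<forall>t'\<in>T. t \<noteq> [] \<and> t' \<noteq> [] \<and> hd t HVar = hd t' HVar \<longrightarrow> t = t')}"

definition obs_le :: "ftrace set \<Rightarrow> itrace set \<Rightarrow> bool" where
  "obs_le S T \<longleftrightarrow> (\<forall>t\<in>S. \<exists>t'. conc t t' \<in> T)"

definition k_observable :: "nat \<Rightarrow> itrace set set \<Rightarrow> bool" where
  "k_observable k P \<longleftrightarrow> P \<subseteq> Prop \<and>
     (\<forall>S\<in>P. \<exists>T\<in>Obs. obs_le T S \<and> card T \<le> k \<and>
        (\<forall>S'\<in>Prop. obs_le T S' \<longrightarrow> S' \<in> P))"

definition k_observable_pairs :: "nat \<Rightarrow> (itrace set \<times> rat) set \<Rightarrow> bool" where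
  "k_observable_pairs k \<P> \<longleftrightarrow> (\<forall>q. k_observable k {M. (M, q) \<in> \<P>})"

definition L_ME :: "(itrace set \<times> rat) set" where
  "L_ME = {(M, q). M \<in> Prop \<and> ME (unif M) M > real_of_rat q}"

definition L_GE :: "(itrace set \<times> rat) set" where
  "L_GE = {(M, q). M \<in> Prop \<and> GE (unif M) M > real_of_rat q}"

end

theory Submission
  imports Defs
begin

text \<open>A program whose outputs distinguish all its inputs leaks, under the uniform prior,
  an amount depending only on the number n of inputs: min-entropy leakage log n and
  guessing-entropy leakage (n - 1) / 2, both strictly increasing in n. At most k traces
  of such a program already occur in a subprogram with at most k inputs, which again
  distinguishes its inputs. A threshold strictly between the leakage at k and at k + 1
  inputs therefore separates a program with k + 1 inputs from a program extending the
  same observation, so no observation of size k can witness membership.\<close>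

lemma guess_cong:
  assumes "\<And>x. x \<in> A \<Longrightarrow> p x = q x"
  shows "guess p A = guess q A"
proof -
  have "image_mset p (mset_set A) = image_mset q (mset_set A)"
    using assms by (cases "finite A") (auto intro: image_mset_cong)
  then show ?thesis unfolding guess_def by simp
qed

lemma guess_const:
  assumes "finite A"
  shows "guess (\<lambda>_. c) A = c * real (card A) * (real (card A) + 1) / 2"
proof -
  have sum_const: "(\<Sum>i<n. real (Suc i) * c) = c * real n * (real n + 1) / 2" for n
    by (induction n) (simp_all add: algebra_simps)
  have "image_mset (\<lambda>_. c) (mset_set A) = mset (replicate (card A) c)"
    by (simp add: image_mset_const_eq)
  then have "rev (sorted_list_of_multiset (image_mset (\<lambda>_. c) (mset_set A))) = replicate (card A) c"
    by (simp only: sorted_list_of_multiset_mset sorted_sort_id sorted_replicate) simp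
  then show ?thesis unfolding guess_def Let_def using sum_const[of "card A"] by simp
qed

lemma guess_point_mass:
  assumes "finite A" "a \<in> A" "\<And>x. x \<in> A \<Longrightarrow> p x = (if x = a then 1 else 0)"
  shows "guess p A = 1"
proof -
  define m where "m = card (A - {a})"
  have "image_mset p (mset_set A) = add_mset (p a) (image_mset p (mset_set (A - {a})))"
    using mset_set.remove[OF assms(1,2)] by simp
  also have "image_mset p (mset_set (A - {a})) = image_mset (\<lambda>_. 0) (mset_set (A - {a}))"
    using assms(1,3) by (intro image_mset_cong) auto
  also have "\<dots> = mset (replicate m 0)"
    by (simp add: image_mset_const_eq m_def)
  finally have "image_mset p (mset_set A) = mset (replicate m 0 @ [1])"
    using assms(2,3) by simp
  moreover have "sort (replicate m (0::real) @ [1]) = replicate m 0 @ [1]"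
    by (rule sorted_sort_id) (simp add: sorted_append)
  ultimately have "rev (sorted_list_of_multiset (image_mset p (mset_set A))) = 1 # replicate m 0"
    by (simp only: sorted_list_of_multiset_mset) simp
  then show ?thesis unfolding guess_def Let_def
    by (simp add: sum.lessThan_Suc_shift del: sum.lessThan_Suc)
qed

lemma input_dom_eq_image: "input_dom M = (\<lambda>t. t 0 HVar) ` M"
  unfolding input_dom_def by auto

lemma card_input_dom_le: "finite M \<Longrightarrow> card (input_dom M) \<le> card M"
  unfolding input_dom_eq_image by (rule card_image_le)

lemma input_dom_mono: "M' \<subseteq> M \<Longrightarrow> input_dom M' \<subseteq> input_dom M"
  unfolding input_dom_def by auto

lemma Prop_subset:
  assumes "M \<in> Prop" "M' \<subseteq> M" "M' \<noteq> {}"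
  shows "M' \<in> Prop"
proof -
  have "finite (input_dom M')"
    using assms(1) input_dom_mono[OF assms(2)] finite_subset unfolding Prop_def by auto
  moreover have "input_dom M' \<noteq> {}" using assms(3) unfolding input_dom_def by auto
  ultimately show ?thesis using assms(1,2) unfolding Prop_def by auto
qed

lemma out_subset:
  assumes "M \<in> Prop" "M' \<subseteq> M" "h \<in> input_dom M'"
  shows "out M' h = out M h"
proof -
  obtain t where t: "t \<in> M'" "t 0 HVar = h" using assms(3) unfolding input_dom_def by auto
  have unique: "s = t" if "s \<in> M" "s 0 HVar = h" for s
    using assms(1,2) t that unfolding Prop_def by auto
  have "(THE s. s \<in> M' \<and> s 0 HVar = h) = t" "(THE s. s \<in> M \<and> s 0 HVar = h) = t"
    using t unique assms(2) by (auto intro!: the_equality)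
  then show ?thesis unfolding out_def by simp
qed

definition reveals_input :: "itrace set \<Rightarrow> bool" where
  "reveals_input M \<longleftrightarrow> (\<forall>h\<in>input_dom M. \<forall>h'\<in>input_dom M. out_is M h (out M h') \<longleftrightarrow> h = h')"

lemma out_is_out: "out_is M h (out M h)"
  unfolding out_is_def by simp

lemma reveals_input_subset:
  assumes "M \<in> Prop" "M' \<subseteq> M" "reveals_input M"
  shows "reveals_input M'"
proof -
  have "out_is M' h ot = out_is M h ot" if "h \<in> input_dom M'" for h ot
    unfolding out_is_def using out_subset[OF assms(1,2) that] by simp
  then show ?thesis
    using assms(3) out_subset[OF assms(1,2)] input_dom_mono[OF assms(2)]
    unfolding reveals_input_def by (metis subsetD)
qed

context
  fixes M :: "itrace set"
  assumes M: "M \<in> Prop" and reveals: "reveals_input M"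
begin

private lemma finite_dom: "finite (input_dom M)" and card_pos: "card (input_dom M) > 0"
  using M unfolding Prop_def by (auto simp: card_gt_0_iff)

private lemma unif_dom: "h \<in> input_dom M \<Longrightarrow> unif M h = 1 / card (input_dom M)"
  unfolding unif_def by simp

private lemma probO_out:
  assumes "h' \<in> input_dom M"
  shows "probO (unif M) M (out M h') = 1 / card (input_dom M)"
proof -
  have "{h\<in>input_dom M. out_is M h (out M h')} = {h'}"
    using reveals assms unfolding reveals_input_def by auto
  then show ?thesis unfolding probO_def using unif_dom assms by simp
qed

private lemma posterior_out:
  assumes "h' \<in> input_dom M" "h \<in> input_dom M"
  shows "probH_given_O (unif M) M h (out M h') = (if h = h' then 1 else 0)"
  using assms probO_out[OF assms(1)] unif_dom[OF assms(2)] reveals card_pos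
  unfolding probH_given_O_def reveals_input_def by auto

private lemma sum_outs: "(\<Sum>ot\<in>outs M. f ot) = (\<Sum>h\<in>input_dom M. f (out M h))"
proof -
  have "inj_on (out M) (input_dom M)"
    using reveals out_is_out unfolding reveals_input_def by (metis inj_onI)
  then show ?thesis unfolding outs_def by (simp add: sum.reindex)
qed

private lemma sum_inverse_card: "(\<Sum>h\<in>input_dom M. 1 / card (input_dom M)) = 1"
  using card_pos by simp

lemma ME_reveals_input: "ME (unif M) M = log 2 (card (input_dom M))"
proof -
  have "unif M ` input_dom M = {1 / card (input_dom M)}"
    using unif_dom M unfolding Prop_def by auto
  then have vuln: "vuln (unif M) M = 1 / card (input_dom M)" unfolding vuln_def by simp
  have "Max ((\<lambda>h. probH_given_O (unif M) M h (out M h')) ` input_dom M) = 1"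
    if "h' \<in> input_dom M" for h'
    using that posterior_out[OF that] finite_dom by (intro Max_eqI) force+
  then have "cond_vuln (unif M) M = 1"
    unfolding cond_vuln_def sum_outs using probO_out sum_inverse_card by simp
  then show ?thesis unfolding ME_def using vuln card_pos by (simp add: log_divide)
qed

lemma GE_reveals_input: "GE (unif M) M = (real (card (input_dom M)) - 1) / 2"
proof -
  have "guessH (unif M) M = guess (\<lambda>_. 1 / card (input_dom M)) (input_dom M)"
    unfolding guessH_def using unif_dom by (rule guess_cong)
  then have prior: "guessH (unif M) M = (real (card (input_dom M)) + 1) / 2"
    using guess_const[OF finite_dom] card_pos by simp
  have "guess (\<lambda>h. probH_given_O (unif M) M h (out M h')) (input_dom M) = 1"
    if "h' \<in> input_dom M" for h'
    using finite_dom that posterior_out[OF that] by (rule guess_point_mass)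
  then have "cond_guess (unif M) M = 1"
    unfolding cond_guess_def sum_outs using probO_out sum_inverse_card by simp
  then show ?thesis unfolding GE_def using prior by (simp add: field_simps)
qed

end

lemma obs_le_small_subprogram:
  assumes "obs_le T M" "finite T" "card T \<le> k" "1 \<le> k" "M \<noteq> {}"
  obtains M' where "M' \<subseteq> M" "M' \<noteq> {}" "finite M'" "card M' \<le> k" "obs_le T M'"
proof (cases "T = {}")
  case True
  obtain t where "t \<in> M" using assms(5) by auto
  with True assms(4) show ?thesis by (intro that[of "{t}"]) (auto simp: obs_le_def)
next
  case False
  define ext where "ext t = (SOME s. s \<in> M \<and> (\<exists>t'. conc t t' = s))" for t
  have ext: "ext t \<in> M \<and> (\<exists>t'. conc t t' = ext t)" if "t \<in> T" for t
    using assms(1) that unfolding obs_le_def ext_def by (metis (mono_tags, lifting) someI)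
  have "card (ext ` T) \<le> k" using card_image_le[OF assms(2), of ext] assms(3) by linarith
  moreover have "obs_le T (ext ` T)" unfolding obs_le_def using ext by blast
  ultimately show ?thesis using False ext assms(2) by (intro that[of "ext ` T"]) auto
qed

lemma not_k_observable_pairs_threshold:
  fixes F :: "itrace set \<Rightarrow> real" and g :: "nat \<Rightarrow> real"
  assumes "1 \<le> k"
    and F: "\<And>M. M \<in> Prop \<Longrightarrow> reveals_input M \<Longrightarrow> F M = g (card (input_dom M))"
    and g_le: "\<And>n. 1 \<le> n \<Longrightarrow> n \<le> k \<Longrightarrow> g n \<le> real_of_rat q"
    and W: "W \<in> Prop" "reveals_input W" "F W > real_of_rat q"
  shows "\<not> k_observable_pairs k {(M, q). M \<in> Prop \<and> F M > real_of_rat q}"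
proof
  assume "k_observable_pairs k {(M, q). M \<in> Prop \<and> F M > real_of_rat q}"
  then have "k_observable k {M. (M, q) \<in> {(M, q). M \<in> Prop \<and> F M > real_of_rat q}}"
    unfolding k_observable_pairs_def by (rule spec)
  then have "k_observable k {M. M \<in> Prop \<and> F M > real_of_rat q}" by simp
  then obtain T where T: "T \<in> Obs" "obs_le T W" "card T \<le> k"
    and all: "\<And>M. M \<in> Prop \<Longrightarrow> obs_le T M \<Longrightarrow> F M > real_of_rat q"
    using W unfolding k_observable_def by blast
  have "W \<noteq> {}" using W(1) unfolding Prop_def input_dom_def by auto
  moreover have "finite T" using T(1) unfolding Obs_def by simp
  ultimately obtain M where M: "M \<subseteq> W" "M \<noteq> {}" "finite M" "card M \<le> k" "obs_le T M"
    using obs_le_small_subprogram[OF T(2) _ T(3) assms(1)] by blast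
  have prog: "M \<in> Prop" using Prop_subset[OF W(1) M(1,2)] .
  have "card (input_dom M) \<le> k" using card_input_dom_le[OF M(3)] M(4) by linarith
  moreover have "1 \<le> card (input_dom M)"
    using prog unfolding Prop_def by (simp add: Suc_leI card_gt_0_iff)
  ultimately have "F M \<le> real_of_rat q"
    using F[OF prog reveals_input_subset[OF W(1) M(1) W(2)]] g_le by simp
  with all[OF prog M(5)] show False by simp
qed

definition echo_program :: "nat \<Rightarrow> itrace set" where
  "echo_program k = (\<lambda>j i v. Some j) ` {..k}"

lemma input_dom_echo_program: "input_dom (echo_program k) = Some ` {..k}"
  unfolding input_dom_def echo_program_def by auto

lemma echo_program_Prop: "echo_program k \<in> Prop"
proof -
  have "\<forall>t\<in>echo_program k. \<forall>t'\<in>echo_program k. t 0 HVar = t' 0 HVar \<longrightarrow> t = t'"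
    unfolding echo_program_def by auto
  then show ?thesis by (simp add: Prop_def input_dom_echo_program)
qed

lemma out_echo_program: "j \<le> k \<Longrightarrow> out (echo_program k) (Some j) = (\<lambda>i. Some j)"
  unfolding out_def by (subst the_equality[of _ "\<lambda>i v. Some j"]) (auto simp: echo_program_def)

lemma reveals_input_echo_program: "reveals_input (echo_program k)"
  unfolding reveals_input_def input_dom_echo_program
  using out_echo_program by (auto simp: out_is_def)

lemma card_input_dom_echo_program: "card (input_dom (echo_program k)) = k + 1"
  unfolding input_dom_echo_program by (simp add: card_image)

theorem theorem9:
  fixes k :: nat
  assumes "k \<ge> 1"
  shows "\<not> k_observable_pairs k L_ME \<and> \<not> k_observable_pairs k L_GE"
proof
  have "log 2 (real k) < log 2 (real k + 1)" using assms by simp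
  then obtain q where q: "log 2 (real k) < real_of_rat q" "real_of_rat q < log 2 (real k + 1)"
    by (metis Rats_cases Rats_dense_in_real)
  have "log 2 (real n) \<le> real_of_rat q" if "1 \<le> n" "n \<le> k" for n
  proof -
    have "log 2 (real n) \<le> log 2 (real k)" using that by simp
    with q(1) show ?thesis by linarith
  qed
  moreover have "ME (unif (echo_program k)) (echo_program k) > real_of_rat q"
    using q(2) by (simp add: ME_reveals_input echo_program_Prop reveals_input_echo_program
          card_input_dom_echo_program add.commute)
  ultimately show "\<not> k_observable_pairs k L_ME"
    unfolding L_ME_def using assms ME_reveals_input
    by (intro not_k_observable_pairs_threshold[where g = "\<lambda>n. log 2 (real n)" and q = q])
      (auto intro: echo_program_Prop reveals_input_echo_program)
next
  define q :: rat where "q = (of_nat k - 1) / 2"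
  have q: "real_of_rat q = (real k - 1) / 2"
    unfolding q_def by (simp add: of_rat_divide of_rat_diff)
  have "GE (unif (echo_program k)) (echo_program k) > real_of_rat q"
    by (simp add: q GE_reveals_input echo_program_Prop reveals_input_echo_program
          card_input_dom_echo_program)
  then show "\<not> k_observable_pairs k L_GE"
    unfolding L_GE_def using assms GE_reveals_input
    by (intro not_k_observable_pairs_threshold[where g = "\<lambda>n. (real n - 1) / 2" and q = q])
      (auto simp: q intro: echo_program_Prop reveals_input_echo_program)
qed

end
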